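(* Let $F_1,\dots,F_n$ be CDFs of independent nonnegative random variables $v_1,\dots,v_n$. For a positive integer $j$ and $p>0$, let $D_j(p)$ be the probability that the $j$-th highest of $v_1,\dots,v_n$ is at most $p$, i.e. the probability that at most $j-1$ of the $v_i$ exceed $p$; in particular $D_1(p)=\prod_{i=1}^nF_i(p)$. Define $\widehat D_j(p)=D_1(p)\sum_{t=0}^{j-1}\frac{1}{t!}\left(-\ln D_1(p)\right)^t$ if $D_1(p)>0$ and $\widehat D_j(p)=0$ if $D_1(p)=0$. Then for any positive integer $j$, any $\delta\le\frac{1}{4j}$ and any $p>0$ such that $F_i(p)\ge1-\delta$ for all $i$, $$D_j(p)\in\left[(1-\delta j)\,\widehat D_j(p),\ (1+2\delta j)\,\widehat D_j(p)\right].$$ *)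

theory Defs
  imports "HOL-Probability.Probability"
begin

definition rv_cdf :: "'a measure \<Rightarrow> ('a \<Rightarrow> real) \<Rightarrow> real \<Rightarrow> real" where
  "rv_cdf M X = cdf (distr M borel X)"

definition Dj :: "'a measure \<Rightarrow> (nat \<Rightarrow> 'a \<Rightarrow> real) \<Rightarrow> nat \<Rightarrow> nat \<Rightarrow> real \<Rightarrow> real" where
  "Dj M v n j p = measure M {\<omega> \<in> space M. card {i\<in>{..<n}. v i \<omega> > p} \<le> j - 1}"

definition D1 :: "'a measure \<Rightarrow> (nat \<Rightarrow> 'a \<Rightarrow> real) \<Rightarrow> nat \<Rightarrow> real \<Rightarrow> real" where
  "D1 M v n p = (\<Prod>i<n. rv_cdf M (v i) p)"

definition Dhat :: "'a measure \<Rightarrow> (nat \<Rightarrow> 'a \<Rightarrow> real) \<Rightarrow> nat \<Rightarrow> nat \<Rightarrow> real \<Rightarrow> real" where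
  "Dhat M v n j p = (if D1 M v n p > 0
     then D1 M v n p * (\<Sum>t<j. (- ln (D1 M v n p)) ^ t / fact t)
     else 0)"

end

theory Submission
  imports Defs
begin

(* With F_i = F_i(p) and r_i = (1 - F_i) / F_i, independence gives
   D_j(p) = D_1(p) * sum_{|S| < j} prod_{i in S} r_i, i.e. D_1(p) times the sum of the elementary
   symmetric polynomials of degree < j in the r_i, while Dhat_j(p) = D_1(p) * T_j(L) with
   T_j(x) = sum_{t<j} x^t / t! and L = sum_i -ln F_i.  By induction on the index set, using the
   Taylor expansion T_k(x + y) = sum_{s<k} y^s / s! * T_{k-s}(x), the truncated symmetric sum of
   nonnegative a_i lies between T_j(A) - m/2 * A * T_{j-2}(A) and T_j(A), where A = sum a_i and
   m bounds the a_i.  Since -ln F_i <= r_i <= -ln F_i / (1 - delta) and r_i <= delta / (1 - delta),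
   these bounds become (1 - delta j) T_j(L) and (1 - delta)^(1-j) T_j(L) <= (1 + 2 delta j) T_j(L). *)

section \<open>Partial sums of the exponential series\<close>

definition exp_taylor :: "nat \<Rightarrow> real \<Rightarrow> real" where
  "exp_taylor j x = (\<Sum>t<j. x ^ t / fact t)"

lemma exp_taylor_0 [simp]: "exp_taylor 0 x = 0"
  by (simp add: exp_taylor_def)

lemma exp_taylor_Suc: "exp_taylor (Suc j) x = exp_taylor j x + x ^ j / fact j"
  by (simp add: exp_taylor_def)

lemma exp_taylor_Suc_at_0: "exp_taylor (Suc j) 0 = 1"
  by (induction j) (simp_all add: exp_taylor_Suc)

lemma exp_taylor_nonneg: "0 \<le> x \<Longrightarrow> 0 \<le> exp_taylor j x"
  unfolding exp_taylor_def by (intro sum_nonneg) auto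

lemma exp_taylor_mono_order: "0 \<le> x \<Longrightarrow> k \<le> j \<Longrightarrow> exp_taylor k x \<le> exp_taylor j x"
  unfolding exp_taylor_def by (intro sum_mono2) auto

lemma exp_taylor_mono: "0 \<le> x \<Longrightarrow> x \<le> y \<Longrightarrow> exp_taylor j x \<le> exp_taylor j y"
  unfolding exp_taylor_def by (intro sum_mono divide_right_mono power_mono) auto

lemma binomial_div_fact:
  fixes x y :: real
  shows "(x + y) ^ k / fact k = (\<Sum>s\<le>k. y ^ s / fact s * (x ^ (k - s) / fact (k - s)))"
proof -
  have "(x + y) ^ k = (\<Sum>s\<le>k. of_nat (k choose s) * y ^ s * x ^ (k - s))"
    using binomial_ring[of y x k] by (simp add: add.commute)
  then have "(x + y) ^ k / fact k = (\<Sum>s\<le>k. of_nat (k choose s) * y ^ s * x ^ (k - s) / fact k)"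
    by (simp add: sum_divide_distrib)
  also have "\<dots> = (\<Sum>s\<le>k. y ^ s / fact s * (x ^ (k - s) / fact (k - s)))"
    by (intro sum.cong) (simp_all add: binomial_fact)
  finally show ?thesis .
qed

lemma exp_taylor_add:
  "exp_taylor k (x + y) = (\<Sum>s<k. y ^ s / fact s * exp_taylor (k - s) x)"
proof (induction k)
  case 0
  then show ?case by simp
next
  case (Suc k)
  have "(\<Sum>s<Suc k. y ^ s / fact s * exp_taylor (Suc k - s) x)
      = (\<Sum>s<Suc k. y ^ s / fact s * exp_taylor (k - s) x)
        + (\<Sum>s<Suc k. y ^ s / fact s * (x ^ (k - s) / fact (k - s)))"
    by (simp add: Suc_diff_le exp_taylor_Suc distrib_left sum.distrib)
  moreover have "(\<Sum>s<Suc k. y ^ s / fact s * exp_taylor (k - s) x) = exp_taylor k (x + y)"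
    by (simp add: Suc.IH)
  moreover have "(\<Sum>s<Suc k. y ^ s / fact s * (x ^ (k - s) / fact (k - s))) = (x + y) ^ k / fact k"
    by (simp only: lessThan_Suc_atMost binomial_div_fact)
  ultimately show ?case
    by (simp add: exp_taylor_Suc)
qed

lemma exp_taylor_add_ge:
  assumes "0 \<le> x" "0 \<le> y"
  shows "exp_taylor k x + y * exp_taylor (k - 1) x \<le> exp_taylor k (x + y)"
proof (cases k)
  case 0
  then show ?thesis by simp
next
  case (Suc k')
  let ?g = "\<lambda>s. y ^ s / fact s * exp_taylor (k - s) x"
  have split: "exp_taylor k (x + y) = exp_taylor k x + (\<Sum>s<k'. ?g (Suc s))"
    unfolding exp_taylor_add Suc by (subst sum.lessThan_Suc_shift) simp
  have "y * exp_taylor k' x \<le> (\<Sum>s<k'. ?g (Suc s))"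
  proof (cases k')
    case 0
    then show ?thesis by simp
  next
    case (Suc k'')
    have "y * exp_taylor k' x = ?g (Suc 0)"
      using \<open>k = Suc k'\<close> by simp
    also have "\<dots> \<le> (\<Sum>s<k'. ?g (Suc s))"
      using Suc assms by (intro member_le_sum) (auto simp: exp_taylor_nonneg)
    finally show ?thesis .
  qed
  then show ?thesis
    using Suc split by simp
qed

lemma exp_taylor_add_le:
  assumes "0 \<le> x" "0 \<le> y"
  shows "exp_taylor (k + 2) (x + y)
    \<le> exp_taylor (k + 2) x + y * exp_taylor (k + 1) x + y\<^sup>2 / 2 * exp_taylor k (x + y)"
proof -
  have coeff: "y ^ (s + 2) / fact (s + 2) \<le> y\<^sup>2 / 2 * (y ^ s / fact s)" for s
  proof -
    have "2 * fact s \<le> (fact (s + 2) :: real)"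
      by (simp add: algebra_simps)
    then have "y ^ (s + 2) / fact (s + 2) \<le> y ^ (s + 2) / (2 * fact s)"
      using assms by (intro divide_left_mono) auto
    also have "\<dots> = y\<^sup>2 / 2 * (y ^ s / fact s)"
      by (simp add: power_add power2_eq_square)
    finally show ?thesis .
  qed
  have "(\<Sum>s<k. y ^ (s + 2) / fact (s + 2) * exp_taylor (k - s) x)
      \<le> (\<Sum>s<k. y\<^sup>2 / 2 * (y ^ s / fact s * exp_taylor (k - s) x))"
    unfolding mult.assoc[symmetric]
    by (intro sum_mono mult_right_mono[OF coeff] exp_taylor_nonneg[OF assms(1)])
  moreover have "exp_taylor (k + 2) (x + y) = exp_taylor (k + 2) x + y * exp_taylor (k + 1) x
      + (\<Sum>s<k. y ^ (s + 2) / fact (s + 2) * exp_taylor (k - s) x)"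
    unfolding exp_taylor_add[of "k + 2"]
    by (simp del: sum.lessThan_Suc add: numeral_2_eq_2 sum.lessThan_Suc_shift)
  ultimately show ?thesis
    by (simp add: exp_taylor_add[of k] sum_distrib_left)
qed

lemma mult_exp_taylor_le:
  assumes "0 \<le> x"
  shows "x * exp_taylor k x \<le> k * exp_taylor (Suc k) x"
proof -
  have "x * exp_taylor k x = (\<Sum>t<k. real (Suc t) * (x ^ Suc t / fact (Suc t)))"
    unfolding exp_taylor_def sum_distrib_left
    by (intro sum.cong) (simp_all add: field_simps del: of_nat_Suc)
  also have "\<dots> \<le> (\<Sum>t<k. real k * (x ^ Suc t / fact (Suc t)))"
    using assms by (intro sum_mono mult_right_mono) auto
  also have "\<dots> \<le> k * (1 + (\<Sum>t<k. x ^ Suc t / fact (Suc t)))"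
    unfolding sum_distrib_left[symmetric] using assms by (simp add: distrib_left sum_nonneg)
  also have "1 + (\<Sum>t<k. x ^ Suc t / fact (Suc t)) = exp_taylor (Suc k) x"
    unfolding exp_taylor_def by (subst sum.lessThan_Suc_shift) simp
  finally show ?thesis .
qed

lemma exp_taylor_scale_le:
  assumes "1 \<le> c" "0 \<le> x"
  shows "exp_taylor j (c * x) \<le> c ^ (j - 1) * exp_taylor j x"
proof -
  have "exp_taylor j (c * x) = (\<Sum>t<j. c ^ t * (x ^ t / fact t))"
    unfolding exp_taylor_def by (simp add: power_mult_distrib)
  also have "\<dots> \<le> (\<Sum>t<j. c ^ (j - 1) * (x ^ t / fact t))"
    using assms by (intro sum_mono mult_right_mono power_increasing) auto
  also have "\<dots> = c ^ (j - 1) * exp_taylor j x"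
    by (simp add: exp_taylor_def sum_distrib_left)
  finally show ?thesis .
qed

section \<open>Truncated sums of elementary symmetric polynomials\<close>

definition esym_below :: "nat \<Rightarrow> ('i \<Rightarrow> real) \<Rightarrow> 'i set \<Rightarrow> real" where
  "esym_below j a I = (\<Sum>S | S \<subseteq> I \<and> card S < j. prod a S)"

lemma esym_below_empty: "esym_below j a {} = exp_taylor j 0"
proof (cases j)
  case (Suc k)
  have only_empty: "{S. S \<subseteq> {} \<and> card S < Suc k} = {{}}"
    by auto
  show ?thesis
    unfolding esym_below_def Suc only_empty by (simp add: exp_taylor_Suc_at_0)
qed (simp add: esym_below_def)

lemma esym_below_mono:
  assumes "\<forall>i\<in>I. 0 \<le> a i \<and> a i \<le> b i"
  shows "esym_below j a I \<le> esym_below j b I"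
  unfolding esym_below_def using assms by (intro sum_mono prod_mono) auto

lemma esym_below_insert:
  assumes "finite I" "x \<notin> I"
  shows "esym_below (Suc k) a (insert x I) = esym_below (Suc k) a I + a x * esym_below k a I"
proof -
  let ?A = "{S. S \<subseteq> I \<and> card S < Suc k}"
  let ?B = "{S. S \<subseteq> I \<and> card S < k}"
  have fin: "finite ?A" "finite ?B"
    using assms(1) by (auto intro: finite_subset[of _ "Pow I"])
  have card_insert: "card (insert x S) = Suc (card S)" if "S \<subseteq> I" for S
    using that assms finite_subset by (metis card_insert_disjoint subsetD)
  have "{S. S \<subseteq> insert x I \<and> card S < Suc k} = ?A \<union> insert x ` ?B"
  proof (intro equalityI subsetI)
    fix S assume S: "S \<in> {S. S \<subseteq> insert x I \<and> card S < Suc k}"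
    show "S \<in> ?A \<union> insert x ` ?B"
    proof (cases "x \<in> S")
      case True
      then have "S = insert x (S - {x})" "S - {x} \<subseteq> I"
        using S by auto
      then show ?thesis
        using S card_insert[of "S - {x}"] by (auto intro!: image_eqI[of _ _ "S - {x}"])
    qed (use S in auto)
  qed (use card_insert assms(2) in auto)
  moreover have "?A \<inter> insert x ` ?B = {}"
    using assms(2) by auto
  moreover have "inj_on (insert x) ?B"
    using assms(2) by (intro inj_onI) (metis insert_ident mem_Collect_eq subsetD)
  moreover have "prod a (insert x S) = a x * prod a S" if "S \<in> ?B" for S
    using that assms finite_subset by (metis (mono_tags) mem_Collect_eq prod.insert subsetD)
  ultimately show ?thesis
    unfolding esym_below_def
    by (simp add: sum.union_disjoint fin sum.reindex sum_distrib_left)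
qed

lemma esym_below_le_exp_taylor:
  assumes "finite I" "\<forall>i\<in>I. 0 \<le> a i"
  shows "esym_below j a I \<le> exp_taylor j (sum a I)"
  using assms
proof (induction I arbitrary: j rule: finite_induct)
  case empty
  then show ?case by (simp add: esym_below_empty)
next
  case (insert x I)
  have ax: "0 \<le> a x" and A: "0 \<le> sum a I"
    using insert.prems by (auto intro: sum_nonneg)
  show ?case
  proof (cases j)
    case 0
    then show ?thesis by (simp add: esym_below_def)
  next
    case (Suc k)
    have "esym_below j a (insert x I) = esym_below (Suc k) a I + a x * esym_below k a I"
      using Suc esym_below_insert insert.hyps by simp
    also have "\<dots> \<le> exp_taylor (Suc k) (sum a I) + a x * exp_taylor k (sum a I)"
      using insert.IH insert.prems ax by (intro add_mono mult_left_mono) auto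
    also have "\<dots> \<le> exp_taylor (Suc k) (sum a I + a x)"
      using exp_taylor_add_ge[OF A ax, of "Suc k"] by simp
    finally show ?thesis
      using Suc insert.hyps by (simp add: add.commute)
  qed
qed

definition exp_taylor_lower :: "real \<Rightarrow> nat \<Rightarrow> real \<Rightarrow> real" where
  "exp_taylor_lower m j x = exp_taylor j x - m / 2 * x * exp_taylor (j - 2) x"

lemma exp_taylor_lower_add_le:
  assumes "0 \<le> x" "0 \<le> h" "h \<le> m"
  shows "exp_taylor_lower m (Suc k) (x + h)
    \<le> exp_taylor_lower m (Suc k) x + h * exp_taylor_lower m k x"
proof (cases k)
  case 0
  then show ?thesis
    by (simp add: exp_taylor_lower_def exp_taylor_Suc)
next
  case (Suc k')
  have ge: "m / 2 * x * (exp_taylor k' x + h * exp_taylor (k' - 1) x)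
      \<le> m / 2 * x * exp_taylor k' (x + h)"
    using exp_taylor_add_ge[OF assms(1,2)] assms by (intro mult_left_mono) auto
  have le: "exp_taylor (k' + 2) (x + h)
      \<le> exp_taylor (k' + 2) x + h * exp_taylor (k' + 1) x + h\<^sup>2 / 2 * exp_taylor k' (x + h)"
    by (rule exp_taylor_add_le[OF assms(1,2)])
  have hm: "h\<^sup>2 / 2 * exp_taylor k' (x + h) \<le> m / 2 * h * exp_taylor k' (x + h)"
    using assms exp_taylor_nonneg[of "x + h" k']
    by (intro mult_right_mono) (auto simp: power2_eq_square mult_right_mono)
  have "exp_taylor (k' + 2) (x + h) - m / 2 * (x + h) * exp_taylor k' (x + h)
      \<le> exp_taylor (k' + 2) x + h * exp_taylor (k' + 1) x - m / 2 * x * exp_taylor k' (x + h)"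
    using le hm by (simp add: distrib_left distrib_right)
  also have "\<dots> \<le> (exp_taylor (k' + 2) x - m / 2 * x * exp_taylor k' x)
      + h * (exp_taylor (k' + 1) x - m / 2 * x * exp_taylor (k' - 1) x)"
    using ge by (simp add: algebra_simps)
  finally show ?thesis
    using Suc by (simp add: exp_taylor_lower_def)
qed

lemma exp_taylor_lower_le_esym_below:
  assumes "finite I" "\<forall>i\<in>I. 0 \<le> a i \<and> a i \<le> m"
  shows "exp_taylor_lower m j (sum a I) \<le> esym_below j a I"
  using assms
proof (induction I arbitrary: j rule: finite_induct)
  case empty
  then show ?case by (simp add: exp_taylor_lower_def esym_below_empty)
next
  case (insert x I)
  have ax: "0 \<le> a x" "a x \<le> m" and A: "0 \<le> sum a I"
    using insert.prems by (auto intro: sum_nonneg)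
  show ?case
  proof (cases j)
    case 0
    then show ?thesis by (simp add: exp_taylor_lower_def esym_below_def)
  next
    case (Suc k)
    have "exp_taylor_lower m j (sum a (insert x I))
        \<le> exp_taylor_lower m (Suc k) (sum a I) + a x * exp_taylor_lower m k (sum a I)"
      using exp_taylor_lower_add_le[OF A ax] Suc insert.hyps by (simp add: add.commute)
    also have "\<dots> \<le> esym_below (Suc k) a I + a x * esym_below k a I"
      using insert.IH insert.prems ax by (intro add_mono mult_left_mono) auto
    also have "\<dots> = esym_below j a (insert x I)"
      using Suc esym_below_insert[OF insert.hyps] by simp
    finally show ?thesis .
  qed
qed

lemma minus_ln_le_odds:
  fixes F :: real
  assumes "0 < F"
  shows "- ln F \<le> (1 - F) / F"
proof -
  have "ln (1 / F) \<le> 1 / F - 1"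
    using assms by (intro ln_le_minus_one) simp
  then show ?thesis
    using assms by (simp add: ln_div diff_divide_distrib)
qed

lemma odds_le_minus_ln:
  fixes F \<delta> :: real
  assumes "1 - \<delta> \<le> F" "F \<le> 1" "\<delta> < 1"
  shows "(1 - F) / F \<le> - ln F / (1 - \<delta>)"
proof -
  have "(1 - F) / F \<le> (1 - F) / (1 - \<delta>)"
    using assms by (intro divide_left_mono) auto
  also have "\<dots> \<le> - ln F / (1 - \<delta>)"
    using assms ln_le_minus_one[of F] by (intro divide_right_mono) auto
  finally show ?thesis .
qed

lemma odds_le:
  fixes F \<delta> :: real
  assumes "1 - \<delta> \<le> F" "F \<le> 1" "\<delta> < 1"
  shows "(1 - F) / F \<le> \<delta> / (1 - \<delta>)"
  using assms by (intro frac_le) auto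

lemma one_div_one_minus_power_le:
  fixes \<delta> :: real
  assumes "0 \<le> \<delta>" "\<delta> * j \<le> 1 / 2"
  shows "(1 / (1 - \<delta>)) ^ (j - 1) \<le> 1 + 2 * \<delta> * j"
proof (cases j)
  case 0
  then show ?thesis by simp
next
  case (Suc k)
  then have "\<delta> * 1 \<le> \<delta> * j"
    using assms(1) by (intro mult_left_mono) auto
  then have "\<delta> \<le> 1 / 2"
    using assms(2) by simp
  have "1 - \<delta> * j \<le> 1 - k * \<delta>"
    using assms Suc by (simp add: algebra_simps)
  also have "\<dots> \<le> (1 - \<delta>) ^ k"
    using Bernoulli_inequality[of "- \<delta>" k] \<open>\<delta> \<le> 1 / 2\<close> by simp
  finally have "1 / (1 - \<delta>) ^ k \<le> 1 / (1 - \<delta> * j)"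
    using assms by (intro divide_left_mono) auto
  also have "\<dots> \<le> 1 + 2 * \<delta> * j"
  proof -
    have "1 \<le> (1 + 2 * (\<delta> * j)) * (1 - \<delta> * j)"
      using assms mult_left_mono[of "\<delta> * j" "1 / 2" "\<delta> * j"] by (simp add: algebra_simps)
    then show ?thesis
      using assms by (simp add: field_simps)
  qed
  finally show ?thesis
    using Suc by (simp add: power_one_over)
qed

lemma minus_ln_prod:
  fixes F :: "'i \<Rightarrow> real"
  assumes "finite I" "\<forall>i\<in>I. 0 < F i"
  shows "- ln (prod F I) = (\<Sum>i\<in>I. - ln (F i))"
  using assms by (subst ln_prod) (auto simp: sum_negf)

lemma exp_taylor_lower_ge:
  assumes "0 \<le> x" "0 \<le> \<delta>" "\<delta> \<le> 1 / 2" "1 \<le> j"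
  shows "(1 - \<delta> * j) * exp_taylor j x \<le> exp_taylor_lower (\<delta> / (1 - \<delta>)) j x"
proof -
  have "x * exp_taylor (j - 2) x \<le> real (j - 2) * exp_taylor (Suc (j - 2)) x"
    by (rule mult_exp_taylor_le[OF assms(1)])
  also have "\<dots> \<le> j * exp_taylor j x"
    using assms(1,4) by (intro mult_mono exp_taylor_mono_order exp_taylor_nonneg) auto
  finally have taylor_le: "x * exp_taylor (j - 2) x \<le> j * exp_taylor j x" .
  have m_le: "\<delta> / (1 - \<delta>) / 2 \<le> \<delta>"
  proof -
    have "\<delta> * (2 * \<delta>) \<le> \<delta> * 1"
      using assms(2,3) by (intro mult_left_mono) auto
    then show ?thesis
      using assms(3) by (simp add: field_simps)
  qed
  have "\<delta> / (1 - \<delta>) / 2 * (x * exp_taylor (j - 2) x) \<le> \<delta> * (j * exp_taylor j x)"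
    using assms(1,2) exp_taylor_nonneg[OF assms(1)]
    by (intro mult_mono[OF m_le taylor_le]) auto
  then show ?thesis
    unfolding exp_taylor_lower_def by (simp add: algebra_simps)
qed

lemma esym_below_odds_ge:
  assumes "finite I" "0 \<le> \<delta>" "\<delta> \<le> 1 / 2" "1 \<le> j"
    and F: "\<forall>i\<in>I. 1 - \<delta> \<le> F i \<and> F i \<le> 1"
  shows "(1 - \<delta> * j) * exp_taylor j (- ln (prod F I)) \<le> esym_below j (\<lambda>i. (1 - F i) / F i) I"
proof -
  define l where "l i = - ln (F i)" for i
  have F_pos: "\<forall>i\<in>I. 0 < F i"
    using F assms(3) by force
  have L: "- ln (prod F I) = sum l I"
    unfolding l_def using minus_ln_prod[OF assms(1) F_pos] .
  have l: "\<forall>i\<in>I. 0 \<le> l i \<and> l i \<le> \<delta> / (1 - \<delta>)"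
  proof
    fix i assume "i \<in> I"
    then show "0 \<le> l i \<and> l i \<le> \<delta> / (1 - \<delta>)"
      using F F_pos assms(3) minus_ln_le_odds[of "F i"] odds_le[of \<delta> "F i"]
      unfolding l_def by force
  qed
  have "(1 - \<delta> * j) * exp_taylor j (sum l I) \<le> exp_taylor_lower (\<delta> / (1 - \<delta>)) j (sum l I)"
    using l assms(2-4) by (intro exp_taylor_lower_ge sum_nonneg) auto
  also have "\<dots> \<le> esym_below j l I"
    by (rule exp_taylor_lower_le_esym_below[OF assms(1) l])
  also have "\<dots> \<le> esym_below j (\<lambda>i. (1 - F i) / F i) I"
    using l F_pos minus_ln_le_odds unfolding l_def by (intro esym_below_mono) auto
  finally show ?thesis
    unfolding L .
qed

lemma esym_below_odds_le:
  assumes "finite I" "0 \<le> \<delta>" "\<delta> * j \<le> 1 / 2" "1 \<le> j"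
    and F: "\<forall>i\<in>I. 1 - \<delta> \<le> F i \<and> F i \<le> 1"
  shows "esym_below j (\<lambda>i. (1 - F i) / F i) I \<le> (1 + 2 * \<delta> * j) * exp_taylor j (- ln (prod F I))"
proof -
  define L where "L = - ln (prod F I)"
  have "\<delta> * 1 \<le> \<delta> * j"
    using assms(2,4) by (intro mult_left_mono) auto
  then have "\<delta> < 1"
    using assms(3) by simp
  then have F_pos: "\<forall>i\<in>I. 0 < F i"
    using F by force
  have L: "L = (\<Sum>i\<in>I. - ln (F i))"
    unfolding L_def using minus_ln_prod[OF assms(1) F_pos] .
  have odds_nonneg: "\<forall>i\<in>I. 0 \<le> (1 - F i) / F i"
    using F F_pos by auto
  have "0 \<le> L"
    unfolding L using F F_pos by (simp add: sum_nonneg)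
  have "esym_below j (\<lambda>i. (1 - F i) / F i) I \<le> exp_taylor j (\<Sum>i\<in>I. (1 - F i) / F i)"
    by (rule esym_below_le_exp_taylor[OF assms(1) odds_nonneg])
  also have "\<dots> \<le> exp_taylor j (1 / (1 - \<delta>) * L)"
  proof (rule exp_taylor_mono)
    show "0 \<le> (\<Sum>i\<in>I. (1 - F i) / F i)"
      using odds_nonneg by (simp add: sum_nonneg)
    show "(\<Sum>i\<in>I. (1 - F i) / F i) \<le> 1 / (1 - \<delta>) * L"
      unfolding L sum_distrib_left using F \<open>\<delta> < 1\<close> odds_le_minus_ln
      by (intro sum_mono) (simp add: divide_inverse mult.commute)
  qed
  also have "\<dots> \<le> (1 / (1 - \<delta>)) ^ (j - 1) * exp_taylor j L"
    using \<open>0 \<le> \<delta>\<close> \<open>\<delta> < 1\<close> \<open>0 \<le> L\<close> by (intro exp_taylor_scale_le) auto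
  also have "\<dots> \<le> (1 + 2 * \<delta> * j) * exp_taylor j L"
    using one_div_one_minus_power_le[OF assms(2,3)] exp_taylor_nonneg[OF \<open>0 \<le> L\<close>]
    by (rule mult_right_mono)
  finally show ?thesis
    unfolding L_def .
qed

section \<open>Exceedances of independent random variables\<close>

lemma prod_if_mem_eq_prod_mult:
  fixes F G :: "'i \<Rightarrow> 'a :: field"
  assumes "finite I" "S \<subseteq> I" "\<forall>i\<in>S. F i \<noteq> 0"
  shows "(\<Prod>i\<in>I. if i \<in> S then G i else F i) = prod F I * (\<Prod>i\<in>S. G i / F i)"
proof -
  have "(\<Prod>i\<in>I. if i \<in> S then G i else F i) = prod G S * prod F (I - S)"
    using assms(1,2) by (simp add: prod.If_cases Int_absorb1 Diff_eq)
  also have "\<dots> = prod F (I - S) * prod F S * (\<Prod>i\<in>S. G i / F i)"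
    using assms finite_subset[OF assms(2,1)] by (simp add: prod_dividef prod_zero_iff)
  also have "prod F (I - S) * prod F S = prod F I"
    by (rule prod.subset_diff[OF assms(2,1), symmetric])
  finally show ?thesis .
qed

lemma rv_cdf_eq_measure:
  assumes "X \<in> borel_measurable M"
  shows "rv_cdf M X p = measure M (X -` {..p} \<inter> space M)"
  unfolding rv_cdf_def cdf_def using assms by (simp add: measure_distr)

lemma exceedance_set_eq_INT:
  fixes v :: "'i \<Rightarrow> 'a \<Rightarrow> real"
  assumes "I \<noteq> {}" "S \<subseteq> I"
  shows "{\<omega> \<in> \<Omega>. {i\<in>I. p < v i \<omega>} = S}
    = (\<Inter>i\<in>I. v i -` (if i \<in> S then {p<..} else {..p}) \<inter> \<Omega>)"
  using assms by (auto split: if_splits)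

lemma (in prob_space) prob_exceedance_set_eq:
  assumes indep: "indep_vars (\<lambda>_. borel) v I" and "finite I" "I \<noteq> {}" "S \<subseteq> I"
  shows "prob {\<omega> \<in> space M. {i\<in>I. p < v i \<omega>} = S}
    = (\<Prod>i\<in>I. if i \<in> S then 1 - rv_cdf M (v i) p else rv_cdf M (v i) p)"
proof -
  have meas: "v i \<in> borel_measurable M" if "i \<in> I" for i
    using indep that by (simp add: indep_vars_def2)
  have "prob {\<omega> \<in> space M. {i\<in>I. p < v i \<omega>} = S}
      = (\<Prod>i\<in>I. prob (v i -` (if i \<in> S then {p<..} else {..p}) \<inter> space M))"
    unfolding exceedance_set_eq_INT[OF assms(3,4)]
    using assms by (intro indep_varsD_finite) auto
  also have "\<dots> = (\<Prod>i\<in>I. if i \<in> S then 1 - rv_cdf M (v i) p else rv_cdf M (v i) p)"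
  proof (intro prod.cong refl)
    fix i assume "i \<in> I"
    have "v i -` {p<..} \<inter> space M = space M - (v i -` {..p} \<inter> space M)"
      by auto
    then show "prob (v i -` (if i \<in> S then {p<..} else {..p}) \<inter> space M)
        = (if i \<in> S then 1 - rv_cdf M (v i) p else rv_cdf M (v i) p)"
      using meas[OF \<open>i \<in> I\<close>] by (simp add: rv_cdf_eq_measure prob_compl measurable_sets)
  qed
  finally show ?thesis .
qed

lemma (in prob_space) prob_exceedance_set_in:
  assumes indep: "indep_vars (\<lambda>_. borel) v I" and "finite I" "I \<noteq> {}" "\<S> \<subseteq> Pow I"
  shows "prob {\<omega> \<in> space M. {i\<in>I. p < v i \<omega>} \<in> \<S>}
    = (\<Sum>S\<in>\<S>. \<Prod>i\<in>I. if i \<in> S then 1 - rv_cdf M (v i) p else rv_cdf M (v i) p)"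
proof -
  define E where "E S = {\<omega> \<in> space M. {i\<in>I. p < v i \<omega>} = S}" for S
  have "finite \<S>"
    using assms(2,4) by (meson finite_Pow_iff finite_subset)
  moreover have "E S \<in> events" if "S \<in> \<S>" for S
  proof -
    have "S \<subseteq> I"
      using that assms(4) by auto
    then show ?thesis
      unfolding E_def exceedance_set_eq_INT[OF assms(3) \<open>S \<subseteq> I\<close>] using assms(2,3) indep
      by (intro sets.finite_INT measurable_sets) (auto simp: indep_vars_def2)
  qed
  moreover have "disjoint_family_on E \<S>"
    unfolding E_def disjoint_family_on_def by auto
  moreover have "{\<omega> \<in> space M. {i\<in>I. p < v i \<omega>} \<in> \<S>} = (\<Union>S\<in>\<S>. E S)"
    unfolding E_def by auto
  ultimately have "prob {\<omega> \<in> space M. {i\<in>I. p < v i \<omega>} \<in> \<S>} = (\<Sum>S\<in>\<S>. prob (E S))"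
    by (auto intro: measure_finite_Union)
  also have "\<dots> = (\<Sum>S\<in>\<S>. \<Prod>i\<in>I. if i \<in> S then 1 - rv_cdf M (v i) p else rv_cdf M (v i) p)"
    unfolding E_def using assms by (intro sum.cong refl prob_exceedance_set_eq) auto
  finally show ?thesis .
qed

lemma Dj_eq_D1_mult_esym_below:
  assumes "prob_space M" "1 \<le> n" "1 \<le> j"
    and indep: "prob_space.indep_vars M (\<lambda>_. borel) v {..<n}"
    and cdf_pos: "\<forall>i<n. 0 < rv_cdf M (v i) p"
  shows "Dj M v n j p
    = D1 M v n p * esym_below j (\<lambda>i. (1 - rv_cdf M (v i) p) / rv_cdf M (v i) p) {..<n}"
proof -
  interpret prob_space M
    by (rule assms(1))
  let ?\<S> = "{S. S \<subseteq> {..<n} \<and> card S < j}"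
  have "{\<omega> \<in> space M. card {i\<in>{..<n}. v i \<omega> > p} \<le> j - 1}
      = {\<omega> \<in> space M. {i\<in>{..<n}. p < v i \<omega>} \<in> ?\<S>}"
    using assms(3) by auto
  then have "Dj M v n j p = prob {\<omega> \<in> space M. {i\<in>{..<n}. p < v i \<omega>} \<in> ?\<S>}"
    by (simp only: Dj_def)
  also have "\<dots> = (\<Sum>S\<in>?\<S>. \<Prod>i<n. if i \<in> S then 1 - rv_cdf M (v i) p else rv_cdf M (v i) p)"
    using assms(2) by (intro prob_exceedance_set_in[OF indep]) (auto simp: lessThan_empty_iff)
  also have "\<dots> = (\<Sum>S\<in>?\<S>. D1 M v n p
      * (\<Prod>i\<in>S. (1 - rv_cdf M (v i) p) / rv_cdf M (v i) p))"
    unfolding D1_def using cdf_pos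
    by (intro sum.cong refl prod_if_mem_eq_prod_mult) auto
  finally show ?thesis
    by (simp add: esym_below_def sum_distrib_left)
qed

theorem proposition3p11:
  fixes M :: "'a measure" and v :: "nat \<Rightarrow> 'a \<Rightarrow> real"
    and n j :: nat and \<delta> p :: real
  assumes "prob_space M"
    and "n \<ge> 1"
    and "\<forall>i<n. v i \<in> borel_measurable M"
    and "prob_space.indep_vars M (\<lambda>_. borel) v {..<n}"
    and "\<forall>i<n. \<forall>\<omega>\<in>space M. 0 \<le> v i \<omega>"
    and "j \<ge> 1"
    and "\<delta> \<le> 1 / (4 * real j)"
    and "p > 0"
    and "\<forall>i<n. rv_cdf M (v i) p \<ge> 1 - \<delta>"
  shows "(1 - \<delta> * real j) * Dhat M v n j p \<le> Dj M v n j p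
       \<and> Dj M v n j p \<le> (1 + 2 * \<delta> * real j) * Dhat M v n j p"
proof -
  interpret prob_space M
    by (rule assms(1))
  define F where "F i = rv_cdf M (v i) p" for i
  have F_le_1: "\<forall>i<n. F i \<le> 1"
    unfolding F_def using assms(3) by (simp add: rv_cdf_eq_measure)
  have F_bounds: "\<forall>i\<in>{..<n}. 1 - \<delta> \<le> F i \<and> F i \<le> 1"
    using F_le_1 assms(9) unfolding F_def by simp
  have "0 \<le> \<delta>"
    using F_bounds assms(2) by force
  have "\<delta> * j \<le> 1 / 4"
    using assms(6,7) by (simp add: field_simps)
  moreover have "\<delta> * 1 \<le> \<delta> * j"
    using \<open>0 \<le> \<delta>\<close> assms(6) by (intro mult_left_mono) auto
  ultimately have "\<delta> \<le> 1 / 2"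
    by simp
  have F_pos: "\<forall>i<n. 0 < F i"
    using F_bounds \<open>\<delta> \<le> 1 / 2\<close> by force
  have D1_pos: "0 < D1 M v n p"
    unfolding D1_def F_def[symmetric] using F_pos by (intro prod_pos) auto
  have Dj: "Dj M v n j p = D1 M v n p * esym_below j (\<lambda>i. (1 - F i) / F i) {..<n}"
    using Dj_eq_D1_mult_esym_below[OF assms(1,2,6,4)] F_pos unfolding F_def by simp
  have Dhat: "Dhat M v n j p = D1 M v n p * exp_taylor j (- ln (prod F {..<n}))"
    using D1_pos unfolding Dhat_def exp_taylor_def by (simp add: D1_def F_def)
  show ?thesis
    unfolding Dj Dhat
    using esym_below_odds_ge[OF _ \<open>0 \<le> \<delta>\<close> \<open>\<delta> \<le> 1 / 2\<close> assms(6) F_bounds]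
      esym_below_odds_le[OF _ \<open>0 \<le> \<delta>\<close> _ assms(6) F_bounds] \<open>\<delta> * j \<le> 1 / 4\<close> D1_pos
    by (simp add: mult.left_commute)
qed

end
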